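(* There exists a constant $c>0$, independent of $n$, such that for all sufficiently large $n\in16\mathbb{N}$, $$\big\|(\partial_x u_{0,n})^2\big\|_{B^0_{\infty,1}(\mathbb{N}(n))}\ge c(\log n)^2 .$$
   Context: $\mathbb{T}=\mathbb{R}/2\pi\mathbb{Z}$, $16\mathbb{N}=\{16,32,48,\dots\}$, and $\mathbb{N}(n)=\{k\in\mathbb{N}: n/8\le k\le n/4\}$. Periodic Fourier transform $\widehat u(\xi)=\int_{\mathbb{T}}e^{-\mathrm{i}x\xi}u(x)\,dx$, $\xi\in\mathbb{Z}$. Fix a smooth $\chi$ supported in the ball of radius $4/3$, equal to $1$ on the ball of radius $3/4$; $\varphi(\xi)=\chi(\xi/2)-\chi(\xi)$, $\varphi_j(\xi)=\varphi(2^{-j}\xi)$. Dyadic blocks: $\Delta_j u=0$ for $j\le-2$, $\Delta_{-1}u=\frac1{2\pi}\sum_{\xi}\chi(\xi)\widehat u(\xi)e^{\mathrm{i}x\xi}$, $\Delta_ju=\frac1{2\pi}\sum_\xi\varphi_j(\xi)\widehat u(\xi)e^{\mathrm{i}x\xi}$ for $j\ge0$; $S_ju=\sum_{-1\le k\le j-1}\Delta_ku$. For $k\in\{0,1\}$, $\|f\|_{B^k_{\infty,1}(\mathbb{N}(n))}=\sum_{j\in\mathbb{N}(n)}2^{kj}\|\Delta_jf\|_{L^\infty(\mathbb{T})}$. Let $h$ be the $2\pi$-periodic function equal to $-\tfrac12$ on $(-\pi,0)$, $\tfrac12$ on $(0,\pi)$, and $0$ at $-\pi,0,\pi$. Define $f_n=S_{n/2}h$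 and $$u_{0,n}(x)=2^{-n}n^{-2/5}\log n\cdot\cos(2^nx)\big(1+n^{-1/5}f_n(x)\big).$$ *)

theory Defs
  imports "HOL-Analysis.Analysis"
begin

definition per_fourier :: "(real \<Rightarrow> complex) \<Rightarrow> int \<Rightarrow> complex" where
  "per_fourier u \<xi> = integral {-pi..pi} (\<lambda>x. cis (- x * of_int \<xi>) * u x)"

definition admissible_chi :: "(real \<Rightarrow> real) \<Rightarrow> bool" where
  "admissible_chi chi \<longleftrightarrow>
     (\<forall>k x. ((deriv ^^ k) chi) differentiable (at x)) \<and>
     closure {x. chi x \<noteq> 0} \<subseteq> ball 0 (4/3) \<and>
     (\<forall>x \<in> ball 0 (3/4). chi x = 1)"

definition phi_lp :: "(real \<Rightarrow> real) \<Rightarrow> real \<Rightarrow> real" where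
  "phi_lp chi \<xi> = chi (\<xi> / 2) - chi \<xi>"

definition Delta :: "(real \<Rightarrow> real) \<Rightarrow> int \<Rightarrow> (real \<Rightarrow> complex) \<Rightarrow> real \<Rightarrow> complex" where
  "Delta chi j u x =
     (if j \<le> -2 then 0
      else if j = -1 then
        complex_of_real (1 / (2 * pi)) *
          infsum (\<lambda>\<xi>::int. complex_of_real (chi (of_int \<xi>)) * per_fourier u \<xi> * cis (x * of_int \<xi>)) UNIV
      else
        complex_of_real (1 / (2 * pi)) *
          infsum (\<lambda>\<xi>::int. complex_of_real (phi_lp chi (2 powr (- real_of_int j) * of_int \<xi>))
                           * per_fourier u \<xi> * cis (x * of_int \<xi>)) UNIV)"

definition S_lp :: "(real \<Rightarrow> real) \<Rightarrow> int \<Rightarrow> (real \<Rightarrow> complex) \<Rightarrow> real \<Rightarrow> complex" where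
  "S_lp chi j u x = (\<Sum>k \<in> {-1..j-1}. Delta chi k u x)"

text \<open>L-infinity norm on T (used only for continuous periodic functions, where it is the sup).\<close>
definition Linf :: "(real \<Rightarrow> complex) \<Rightarrow> real" where
  "Linf g = (SUP x \<in> {-pi..pi}. cmod (g x))"

definition Nset :: "nat \<Rightarrow> nat set" where
  "Nset n = {k. real n / 8 \<le> real k \<and> real k \<le> real n / 4}"

definition besov_trunc :: "(real \<Rightarrow> real) \<Rightarrow> nat \<Rightarrow> nat set \<Rightarrow> (real \<Rightarrow> complex) \<Rightarrow> real" where
  "besov_trunc chi k A f = (\<Sum>j \<in> A. 2 ^ (k * j) * Linf (Delta chi (int j) f))"

text \<open>h: 2pi-periodic, -1/2 on (-pi,0), 1/2 on (0,pi), 0 at multiples of pi.\<close>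
definition hsq :: "real \<Rightarrow> real" where
  "hsq x = (if x - 2 * pi * of_int \<lfloor>(x + pi) / (2 * pi)\<rfloor> \<in> {-pi<..<0} then -1/2
            else if x - 2 * pi * of_int \<lfloor>(x + pi) / (2 * pi)\<rfloor> \<in> {0<..<pi} then 1/2
            else 0)"

definition f_n :: "(real \<Rightarrow> real) \<Rightarrow> nat \<Rightarrow> real \<Rightarrow> complex" where
  "f_n chi n = S_lp chi (int (n div 2)) (\<lambda>x. complex_of_real (hsq x))"

definition u0 :: "(real \<Rightarrow> real) \<Rightarrow> nat \<Rightarrow> real \<Rightarrow> complex" where
  "u0 chi n x = complex_of_real (2 powr (- real n) * real n powr (-2/5) * ln (real n) * cos (2 ^ n * x))
              * (1 + complex_of_real (real n powr (-1/5)) * f_n chi n x)"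

end

theory Submission
  imports Defs
begin

text \<open>
  Write \<open>u\<^sub>0 = A cos(Nx) (1 + \<epsilon> f\<^sub>n)\<close> with \<open>N = 2^n\<close>, \<open>A N = n^(-2/5) log n\<close> and
  \<open>\<epsilon> = n^(-1/5)\<close>; \<open>f\<^sub>n\<close> is a trigonometric polynomial with odd frequencies of size
  \<open>O(2^(n/2))\<close> that agrees with the square wave \<open>h\<close> at low frequencies. In \<open>(u\<^sub>0')^2\<close> every
  term either oscillates at frequency about \<open>2N\<close> or is quadratic in \<open>f\<^sub>n\<close>, hence has even
  spectrum, except the cross term \<open>A^2 N^2 \<epsilon> f\<^sub>n\<close>. So at the odd frequencies \<open>\<xi>\<close> of a block
  \<open>j \<in> N(n)\<close> the Fourier coefficients of \<open>(u\<^sub>0')^2\<close> are \<open>(log n)^2/n \<cdot> (-2i/\<xi>)\<close>, those of a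
  rescaled square wave, whose dyadic blocks do not decay: pairing \<open>\<Delta>\<^sub>j\<close> with a modulated Fejer
  kernel carried by these frequencies gives \<open>\<parallel>\<Delta>\<^sub>j (u\<^sub>0')^2\<parallel>\<^sub>\<infinity> \<ge> (log n)^2 / (48 \<pi> n)\<close>,
  and \<open>N(n)\<close> contains at least \<open>n/8\<close> blocks.
\<close>

section \<open>Trigonometric polynomials and their spectrum\<close>

definition trig_poly :: "(int \<Rightarrow> complex) \<Rightarrow> int set \<Rightarrow> real \<Rightarrow> complex" where
  "trig_poly a S x = (\<Sum>\<eta>\<in>S. a \<eta> * cis (x * of_int \<eta>))"

lemma has_vector_derivative_cis_int:
  "((\<lambda>x. cis (x * of_int k)) has_vector_derivative (\<i> * of_int k * cis (x * of_int k))) (at x within A)"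
  unfolding has_vector_derivative_def
  by (rule has_derivative_eq_rhs, rule derivative_eq_intros | simp)+
     (auto simp: algebra_simps fun_eq_iff scaleR_conv_of_real)

lemma cis_int_has_integral:
  assumes "a \<le> b"
  shows "((\<lambda>x. cis (x * of_int k)) has_integral
           (if k = 0 then of_real (b - a) else (cis (b * of_int k) - cis (a * of_int k)) / (\<i> * of_int k))) {a..b}"
proof (cases "k = 0")
  case True
  then show ?thesis using has_integral_const_real[of "1::complex" a b] assms
    by (simp add: scaleR_conv_of_real)
next
  case False
  have "((\<lambda>x. cis (x * of_int k)) has_integral
        (cis (b * of_int k) / (\<i> * of_int k) - cis (a * of_int k) / (\<i> * of_int k))) {a..b}"
  proof (rule fundamental_theorem_of_calculus[OF assms])
    fix x
    have "((\<lambda>x. cis (x * of_int k) / (\<i> * of_int k)) has_vector_derivative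
           \<i> * of_int k * cis (x * of_int k) / (\<i> * of_int k)) (at x within {a..b})"
      using has_vector_derivative_cis_int by (rule has_vector_derivative_divide)
    then show "((\<lambda>x. cis (x * of_int k) / (\<i> * of_int k)) has_vector_derivative cis (x * of_int k))
               (at x within {a..b})"
      using False by simp
  qed
  then show ?thesis using False by (simp add: diff_divide_distrib)
qed

lemma cis_pi_int: "cis (pi * of_int k) = (if even k then 1 else -1)"
proof -
  obtain m where "k = int m \<or> k = - int m" by (metis int_cases2)
  then show ?thesis by (auto simp: complex_eq_iff)
qed

lemma cis_int_has_integral_period:
  "((\<lambda>x. cis (x * of_int k)) has_integral (if k = 0 then of_real (2 * pi) else 0)) {-pi..pi}"
proof (cases "k = 0")
  case True
  then show ?thesis using cis_int_has_integral[of "-pi" pi k] by simp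
next
  case False
  then show ?thesis using cis_int_has_integral[of "-pi" pi k] cis_pi_int[of k] cis_pi_int[of "-k"] by simp
qed

lemma trig_poly_fourier_has_integral:
  assumes "finite S"
  shows "((\<lambda>x. cis (- x * of_int \<xi>) * trig_poly a S x) has_integral
           of_real (2 * pi) * (if \<xi> \<in> S then a \<xi> else 0)) {-pi..pi}"
proof -
  have "((\<lambda>x. \<Sum>\<eta>\<in>S. a \<eta> * cis (x * of_int (\<eta> - \<xi>))) has_integral
          (\<Sum>\<eta>\<in>S. a \<eta> * (if \<eta> - \<xi> = 0 then of_real (2 * pi) else 0))) {-pi..pi}"
    by (intro has_integral_sum assms has_integral_mult_right cis_int_has_integral_period)
  moreover have "(\<lambda>x. cis (- x * of_int \<xi>) * trig_poly a S x) = (\<lambda>x. \<Sum>\<eta>\<in>S. a \<eta> * cis (x * of_int (\<eta> - \<xi>)))"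
    by (auto simp: trig_poly_def sum_distrib_left fun_eq_iff algebra_simps cis_mult)
  moreover have "(\<Sum>\<eta>\<in>S. a \<eta> * (if \<eta> - \<xi> = 0 then of_real (2 * pi) else 0))
      = of_real (2 * pi) * (if \<xi> \<in> S then a \<xi> else 0)"
    using assms by (simp add: mult.commute if_distrib sum.delta' cong: if_cong)
  ultimately show ?thesis by simp
qed

lemma has_vector_derivative_trig_poly:
  assumes "finite S"
  shows "(trig_poly a S has_vector_derivative trig_poly (\<lambda>\<eta>. \<i> * of_int \<eta> * a \<eta>) S x) (at x within A)"
proof -
  have "((\<lambda>x. \<Sum>\<eta>\<in>S. a \<eta> * cis (x * of_int \<eta>)) has_vector_derivative
         (\<Sum>\<eta>\<in>S. a \<eta> * (\<i> * of_int \<eta> * cis (x * of_int \<eta>)))) (at x within A)"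
    by (intro has_vector_derivative_sum has_vector_derivative_mult_right has_vector_derivative_cis_int)
  then show ?thesis unfolding trig_poly_def[abs_def] by (simp add: algebra_simps)
qed

lemma continuous_on_trig_poly: "continuous_on A (trig_poly a S)"
  unfolding trig_poly_def[abs_def] by (intro continuous_intros)

lemma trig_poly_sum: "trig_poly (\<lambda>\<eta>. \<Sum>i\<in>I. c i \<eta>) S x = (\<Sum>i\<in>I. trig_poly (c i) S x)"
  unfolding trig_poly_def by (simp add: sum_distrib_right) (rule sum.swap)

lemma trig_poly_mult:
  assumes "finite S" "finite T"
  shows "trig_poly a S x * trig_poly b T x =
    trig_poly (\<lambda>\<kappa>. \<Sum>p\<in>{p \<in> S \<times> T. fst p + snd p = \<kappa>}. a (fst p) * b (snd p))
      ((\<lambda>p. fst p + snd p) ` (S \<times> T)) x"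
proof -
  define F where "F p = a (fst p) * b (snd p) * cis (x * of_int (fst p + snd p))" for p
  have "trig_poly a S x * trig_poly b T x = (\<Sum>\<eta>\<in>S. \<Sum>\<zeta>\<in>T. F (\<eta>, \<zeta>))"
    by (simp add: trig_poly_def sum_product F_def cis_mult distrib_left mult_ac)
  also have "\<dots> = (\<Sum>\<kappa>\<in>(\<lambda>p. fst p + snd p) ` (S \<times> T). \<Sum>p\<in>{p \<in> S \<times> T. fst p + snd p = \<kappa>}. F p)"
    by (simp add: sum.cartesian_product' sum.image_gen[OF finite_cartesian_product[OF assms], symmetric])
  also have "\<dots> = trig_poly (\<lambda>\<kappa>. \<Sum>p\<in>{p \<in> S \<times> T. fst p + snd p = \<kappa>}. a (fst p) * b (snd p))
      ((\<lambda>p. fst p + snd p) ` (S \<times> T)) x"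
    unfolding trig_poly_def sum_distrib_right by (intro sum.cong refl) (simp add: F_def)
  finally show ?thesis .
qed

definition spectrum_in :: "(real \<Rightarrow> complex) \<Rightarrow> int set \<Rightarrow> bool" where
  "spectrum_in g \<Omega> \<longleftrightarrow> (\<exists>a S. finite S \<and> S \<subseteq> \<Omega> \<and> g = trig_poly a S)"

lemma spectrum_in_trig_poly:
  assumes "finite S" "{\<eta> \<in> S. a \<eta> \<noteq> 0} \<subseteq> \<Omega>"
  shows "spectrum_in (trig_poly a S) \<Omega>"
proof -
  have "trig_poly a S = trig_poly a {\<eta> \<in> S. a \<eta> \<noteq> 0}"
  proof
    fix x
    show "trig_poly a S x = trig_poly a {\<eta> \<in> S. a \<eta> \<noteq> 0} x"
      unfolding trig_poly_def by (rule sum.mono_neutral_right) (use assms(1) in auto)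
  qed
  then show ?thesis unfolding spectrum_in_def
    using assms by (intro exI[of _ a] exI[of _ "{\<eta> \<in> S. a \<eta> \<noteq> 0}"]) simp
qed

lemma spectrum_in_mono: "spectrum_in g \<Omega> \<Longrightarrow> \<Omega> \<subseteq> \<Omega>' \<Longrightarrow> spectrum_in g \<Omega>'"
  unfolding spectrum_in_def by blast

lemma spectrum_in_cis: "k \<in> \<Omega> \<Longrightarrow> spectrum_in (\<lambda>x. cis (x * of_int k)) \<Omega>"
  unfolding spectrum_in_def trig_poly_def
  by (intro exI[of _ "\<lambda>_. 1"] exI[of _ "{k}"]) auto

lemma spectrum_in_const: "0 \<in> \<Omega> \<Longrightarrow> spectrum_in (\<lambda>x. c) \<Omega>"
  unfolding spectrum_in_def trig_poly_def
  by (intro exI[of _ "\<lambda>_. c"] exI[of _ "{0}"]) auto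

lemma spectrum_in_cmult:
  assumes "spectrum_in g \<Omega>"
  shows "spectrum_in (\<lambda>x. c * g x) \<Omega>"
proof -
  obtain a S where S: "finite S" "S \<subseteq> \<Omega>" and g: "g = trig_poly a S"
    using assms unfolding spectrum_in_def by blast
  have "(\<lambda>x. c * g x) = trig_poly (\<lambda>\<eta>. c * a \<eta>) S"
    by (simp add: g fun_eq_iff trig_poly_def sum_distrib_left mult.assoc)
  with S show ?thesis unfolding spectrum_in_def by blast
qed

lemma spectrum_in_add:
  assumes "spectrum_in g \<Omega>" "spectrum_in h \<Omega>"
  shows "spectrum_in (\<lambda>x. g x + h x) \<Omega>"
proof -
  obtain a S b T where S: "finite S" "S \<subseteq> \<Omega>" "g = trig_poly a S"
    and T: "finite T" "T \<subseteq> \<Omega>" "h = trig_poly b T"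
    using assms unfolding spectrum_in_def by blast
  have extend: "trig_poly c U x = trig_poly (\<lambda>\<eta>. if \<eta> \<in> U then c \<eta> else 0) (S \<union> T) x"
    if "U \<subseteq> S \<union> T" for c U x
  proof -
    have "trig_poly (\<lambda>\<eta>. if \<eta> \<in> U then c \<eta> else 0) (S \<union> T) x
        = (\<Sum>\<eta>\<in>S \<union> T. if \<eta> \<in> U then c \<eta> * cis (x * of_int \<eta>) else 0)"
      unfolding trig_poly_def by (rule sum.cong) auto
    also have "\<dots> = (\<Sum>\<eta>\<in>(S \<union> T) \<inter> U. c \<eta> * cis (x * of_int \<eta>))"
      by (rule sum.inter_restrict[symmetric]) (use S(1) T(1) in simp)
    also have "(S \<union> T) \<inter> U = U" using that by blast
    finally show ?thesis by (simp add: trig_poly_def)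
  qed
  have "g x + h x = trig_poly (\<lambda>\<eta>. (if \<eta> \<in> S then a \<eta> else 0) + (if \<eta> \<in> T then b \<eta> else 0)) (S \<union> T) x"
    for x using extend[of S a x, OF Un_upper1] extend[of T b x, OF Un_upper2]
    by (simp add: S T trig_poly_def distrib_right sum.distrib)
  then show ?thesis unfolding spectrum_in_def using S(1,2) T(1,2)
    by (intro exI[of _ "\<lambda>\<eta>. (if \<eta> \<in> S then a \<eta> else 0) + (if \<eta> \<in> T then b \<eta> else 0)"]
        exI[of _ "S \<union> T"]) (auto simp: fun_eq_iff)
qed

lemma spectrum_in_mult:
  assumes "spectrum_in g \<Omega>" "spectrum_in h \<Omega>'"
  shows "spectrum_in (\<lambda>x. g x * h x) {\<eta> + \<zeta> | \<eta> \<zeta>. \<eta> \<in> \<Omega> \<and> \<zeta> \<in> \<Omega>'}"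
proof -
  obtain a S b T where S: "finite S" "S \<subseteq> \<Omega>" "g = trig_poly a S"
    and T: "finite T" "T \<subseteq> \<Omega>'" "h = trig_poly b T"
    using assms unfolding spectrum_in_def by blast
  have "(\<lambda>p. fst p + snd p) ` (S \<times> T) \<subseteq> {\<eta> + \<zeta> | \<eta> \<zeta>. \<eta> \<in> \<Omega> \<and> \<zeta> \<in> \<Omega>'}"
    using S(2) T(2) by force
  then show ?thesis unfolding spectrum_in_def S(3) T(3) trig_poly_mult[OF S(1) T(1)]
    using S(1) T(1) by (intro exI conjI) (auto simp: fun_eq_iff trig_poly_mult)
qed

lemma spectrum_in_fourier_has_integral:
  assumes "spectrum_in g \<Omega>" "\<xi> \<notin> \<Omega>"
  shows "((\<lambda>x. cis (- x * of_int \<xi>) * g x) has_integral 0) {-pi..pi}"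
proof -
  obtain a S where S: "finite S" "S \<subseteq> \<Omega>" and g: "g = trig_poly a S"
    using assms(1) unfolding spectrum_in_def by blast
  with assms(2) have "\<xi> \<notin> S" by blast
  then show ?thesis using trig_poly_fourier_has_integral[OF S(1), of \<xi> a] by (simp add: g)
qed

lemma spectrum_in_diff:
  "spectrum_in g \<Omega> \<Longrightarrow> spectrum_in h \<Omega> \<Longrightarrow> spectrum_in (\<lambda>x. g x - h x) \<Omega>"
  using spectrum_in_add[of g \<Omega> "\<lambda>x. -1 * h x"] spectrum_in_cmult[of h \<Omega> "-1"] by simp

lemma spectrum_in_cos:
  assumes "k \<in> \<Omega>" "- k \<in> \<Omega>"
  shows "spectrum_in (\<lambda>x. of_real (cos (of_int k * x))) \<Omega>"
proof -
  have eq: "(\<lambda>x. of_real (cos (of_int k * x))) = (\<lambda>x. 1/2 * cis (x * of_int k) + 1/2 * cis (x * of_int (- k)))"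
    by (simp add: fun_eq_iff complex_eq_iff mult.commute)
  show ?thesis unfolding eq by (intro spectrum_in_add spectrum_in_cmult spectrum_in_cis assms)
qed

lemma spectrum_in_sin:
  assumes "k \<in> \<Omega>" "- k \<in> \<Omega>"
  shows "spectrum_in (\<lambda>x. of_real (sin (of_int k * x))) \<Omega>"
proof -
  have eq: "(\<lambda>x. of_real (sin (of_int k * x))) = (\<lambda>x. - \<i> / 2 * cis (x * of_int k) + \<i> / 2 * cis (x * of_int (- k)))"
    by (simp add: fun_eq_iff complex_eq_iff mult.commute)
  show ?thesis unfolding eq by (intro spectrum_in_add spectrum_in_cmult spectrum_in_cis assms)
qed

section \<open>Sup norm and a modulated Fejer kernel\<close>

lemma norm_le_Linf:
  assumes "continuous_on {-pi..pi} g" "x \<in> {-pi..pi}"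
  shows "cmod (g x) \<le> Linf g"
proof -
  have "bounded (g ` {-pi..pi})"
    by (intro compact_imp_bounded compact_continuous_image assms) auto
  then have "bdd_above ((\<lambda>x. cmod (g x)) ` {-pi..pi})"
    using bdd_above_norm[of "g ` {-pi..pi}"] by (simp add: image_image)
  then show ?thesis unfolding Linf_def by (rule cSUP_upper[OF assms(2)])
qed

lemma norm_integral_le_Linf:
  assumes "continuous_on {-pi..pi} g"
    and "((\<lambda>x. g x * w x) has_integral P) {-pi..pi}"
    and "((\<lambda>x. cmod (w x)) has_integral W) {-pi..pi}"
  shows "cmod P \<le> Linf g * W"
proof -
  have bound: "((\<lambda>x. Linf g * cmod (w x)) has_integral (Linf g * W)) {-pi..pi}"
    using has_integral_mult_right[OF assms(3)] by simp
  have "norm (integral {-pi..pi} (\<lambda>x. g x * w x)) \<le> integral {-pi..pi} (\<lambda>x. Linf g * cmod (w x))"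
  proof (rule integral_norm_bound_integral)
    show "(\<lambda>x. g x * w x) integrable_on {-pi..pi}" using assms(2) by blast
    show "(\<lambda>x. Linf g * cmod (w x)) integrable_on {-pi..pi}" using bound by blast
    show "norm (g x * w x) \<le> Linf g * cmod (w x)" if "x \<in> {-pi..pi}" for x
      using norm_le_Linf[OF assms(1) that] by (simp add: norm_mult mult_right_mono)
  qed
  then show ?thesis using assms(2,3) bound by (simp add: integral_unique)
qed

text \<open>This is \<open>e^(iMx) |D(x)|^2 / L\<close> with \<open>D(x) = \<Sum>t<L. e^(2itx)\<close>, so its \<open>L\<^sup>1\<close> norm is exactly
  \<open>2\<pi>\<close>, while all its frequencies lie in \<open>M + 2\<int>\<close>.\<close>
definition modulated_fejer :: "nat \<Rightarrow> int \<Rightarrow> real \<Rightarrow> complex" where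
  "modulated_fejer L M x = (\<Sum>t<L. \<Sum>t'<L. cis (x * of_int (M + 2 * int t - 2 * int t'))) / of_nat L"

lemma modulated_fejer_norm_has_integral:
  assumes "L > 0"
  shows "((\<lambda>x. cmod (modulated_fejer L M x)) has_integral 2 * pi) {-pi..pi}"
proof -
  define D where "D x = (\<Sum>t<L. cis (x * of_int (2 * int t)))" for x
  have square: "(\<Sum>t<L. \<Sum>t'<L. cis (x * of_int (m + 2 * int t - 2 * int t'))) = cis (x * of_int m) * (D x * cnj (D x))"
    for x m by (simp add: D_def sum_distrib_left sum_distrib_right cis_cnj cis_mult algebra_simps) (rule sum.swap)
  have norm_eq: "cmod (modulated_fejer L M x) = Re (\<Sum>t<L. \<Sum>t'<L. cis (x * of_int (0 + 2 * int t - 2 * int t'))) / real L" for x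
    unfolding modulated_fejer_def square complex_norm_square[symmetric]
    by (simp add: norm_divide norm_mult norm_power del: of_real_power)
  have "((\<lambda>x. \<Sum>t<L. \<Sum>t'<L. cis (x * of_int (0 + 2 * int t - 2 * int t'))) has_integral
        (\<Sum>t<L. \<Sum>t'<L. if 0 + 2 * int t - 2 * int t' = 0 then of_real (2 * pi) else 0)) {-pi..pi}"
    by (intro has_integral_sum finite_lessThan cis_int_has_integral_period)
  moreover have "(\<Sum>t<L. \<Sum>t'<L. if 0 + 2 * int t - 2 * int t' = 0 then of_real (2 * pi) else (0::complex))
      = of_nat L * of_real (2 * pi)"
    by (simp add: sum.delta)
  ultimately have "((\<lambda>x. Re (\<Sum>t<L. \<Sum>t'<L. cis (x * of_int (0 + 2 * int t - 2 * int t'))) / real L) has_integral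
        Re (of_nat L * of_real (2 * pi)) / real L) {-pi..pi}"
    by (intro has_integral_divide has_integral_Re) simp
  then show ?thesis using assms by (simp add: norm_eq)
qed

lemma trig_poly_modulated_fejer_has_integral:
  assumes "finite S"
  shows "((\<lambda>x. trig_poly c S x * modulated_fejer L M x) has_integral
     of_real (2 * pi) / of_nat L * (\<Sum>t<L. \<Sum>t'<L.
        if - (M + 2 * int t - 2 * int t') \<in> S then c (- (M + 2 * int t - 2 * int t')) else 0)) {-pi..pi}"
proof -
  have eq: "(\<lambda>x. trig_poly c S x * modulated_fejer L M x) = (\<lambda>x. (\<Sum>t<L. \<Sum>t'<L.
      cis (- x * of_int (- (M + 2 * int t - 2 * int t'))) * trig_poly c S x) / of_nat L)"
    by (auto simp: modulated_fejer_def fun_eq_iff sum_distrib_left sum_distrib_right algebra_simps)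
  have val: "(\<Sum>t<L. \<Sum>t'<L. of_real (2 * pi) * X t t') / of_nat L
      = of_real (2 * pi) / of_nat L * (\<Sum>t<L. \<Sum>t'<L. X t t')" for X :: "nat \<Rightarrow> nat \<Rightarrow> complex"
    by (simp add: sum_distrib_left sum_divide_distrib)
  show ?thesis unfolding eq val[symmetric]
    by (intro has_integral_divide has_integral_sum finite_lessThan trig_poly_fourier_has_integral assms)
qed

lemma Linf_trig_poly_ge_fejer_average:
  assumes "finite S" "0 < L"
  shows "cmod (\<Sum>t<L. \<Sum>t'<L. if - (M + 2 * int t - 2 * int t') \<in> S then a (- (M + 2 * int t - 2 * int t')) else 0)
      / real L \<le> Linf (trig_poly a S)" (is "cmod ?s / _ \<le> _")
proof -
  have "cmod (of_real (2 * pi) / of_nat L * ?s) = cmod ?s / real L * (2 * pi)"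
    by (simp add: norm_mult norm_divide)
  then have "cmod ?s / real L * (2 * pi) \<le> Linf (trig_poly a S) * (2 * pi)"
    using norm_integral_le_Linf[OF continuous_on_trig_poly
        trig_poly_modulated_fejer_has_integral[OF assms(1), where c = a and M = M]
        modulated_fejer_norm_has_integral[OF assms(2)]]
    by (simp only:)
  then show ?thesis by (rule mult_right_le_imp_le) simp
qed

section \<open>The square wave and its Littlewood--Paley blocks\<close>

lemma hsq_pos: "x \<in> {0<..<pi} \<Longrightarrow> hsq x = 1/2"
  and hsq_neg: "x \<in> {-pi<..<0} \<Longrightarrow> hsq x = -1/2"
proof -
  assume "x \<in> {0<..<pi}"
  moreover from this have "\<lfloor>(x + pi) / (2 * pi)\<rfloor> = 0"
    by (subst floor_eq_iff) (auto simp: field_simps)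
  ultimately show "hsq x = 1/2" unfolding hsq_def by auto
next
  assume "x \<in> {-pi<..<0}"
  moreover from this have "\<lfloor>(x + pi) / (2 * pi)\<rfloor> = 0"
    by (subst floor_eq_iff) (auto simp: field_simps)
  ultimately show "hsq x = -1/2" unfolding hsq_def by auto
qed

lemma per_fourier_hsq:
  "per_fourier (\<lambda>x. complex_of_real (hsq x)) \<xi> = (if even \<xi> then 0 else - 2 * \<i> / of_int \<xi>)"
proof -
  define k where "k = - \<xi>"
  define I where "I a b = (if k = 0 then of_real (b - a) else (cis (b * of_int k) - cis (a * of_int k)) / (\<i> * of_int k))"
    for a b
  have left: "((\<lambda>x. cis (x * of_int k) * complex_of_real (hsq x)) has_integral - I (-pi) 0 / 2) {-pi..0}"
  proof (rule has_integral_spike_finite[of "{-pi, 0}"])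
    show "((\<lambda>x. cis (x * of_int k) * (-1/2)) has_integral - I (-pi) 0 / 2) {-pi..0}"
      using has_integral_mult_left[OF cis_int_has_integral[of "-pi" 0 k], of "-1/2"] by (simp add: I_def)
  qed (auto simp: hsq_neg)
  have right: "((\<lambda>x. cis (x * of_int k) * complex_of_real (hsq x)) has_integral I 0 pi / 2) {0..pi}"
  proof (rule has_integral_spike_finite[of "{0, pi}"])
    show "((\<lambda>x. cis (x * of_int k) * (1/2)) has_integral I 0 pi / 2) {0..pi}"
      using has_integral_mult_left[OF cis_int_has_integral[of 0 pi k], of "1/2"] by (simp add: I_def)
  qed (auto simp: hsq_pos)
  have "((\<lambda>x. cis (x * of_int k) * complex_of_real (hsq x)) has_integral - I (-pi) 0 / 2 + I 0 pi / 2) {-pi..pi}"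
    by (rule has_integral_combine[OF _ _ left right]) auto
  then have "per_fourier (\<lambda>x. complex_of_real (hsq x)) \<xi> = - I (-pi) 0 / 2 + I 0 pi / 2"
    unfolding per_fourier_def k_def by (simp add: integral_unique)
  also have "\<dots> = (if even \<xi> then 0 else - 2 * \<i> / of_int \<xi>)"
    using cis_pi_int[of k] cis_pi_int[of "-k"] by (auto simp: I_def k_def field_simps)
  finally show ?thesis .
qed

lemma admissible_chi_eq_0:
  assumes "admissible_chi chi" "4/3 \<le> \<bar>t\<bar>"
  shows "chi t = 0"
proof (rule ccontr)
  assume "chi t \<noteq> 0"
  then have "t \<in> closure {x. chi x \<noteq> 0}" by (simp add: closure_def)
  then show False using assms unfolding admissible_chi_def by auto
qed

lemma admissible_chi_eq_1: "admissible_chi chi \<Longrightarrow> \<bar>t\<bar> < 3/4 \<Longrightarrow> chi t = 1"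
  unfolding admissible_chi_def by auto

definition lp_symbol :: "(real \<Rightarrow> real) \<Rightarrow> int \<Rightarrow> int \<Rightarrow> real" where
  "lp_symbol chi j \<xi> = (if j = -1 then chi (of_int \<xi>) else phi_lp chi (2 powr (- real_of_int j) * of_int \<xi>))"

lemma lp_symbol_eq_0:
  assumes "admissible_chi chi" "-1 \<le> j" "3 * 2 powr real_of_int j \<le> real_of_int \<bar>\<xi>\<bar>"
  shows "lp_symbol chi j \<xi> = 0"
proof (cases "j = -1")
  case True
  with assms show ?thesis by (simp add: lp_symbol_def powr_minus admissible_chi_eq_0)
next
  case False
  have "3 = 2 powr (- real_of_int j) * (3 * 2 powr real_of_int j)" by (simp add: powr_minus)
  also have "\<dots> \<le> \<bar>2 powr (- real_of_int j) * of_int \<xi>\<bar>"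
    using assms(3) by (simp add: abs_mult)
  finally show ?thesis using False assms(1)
    by (simp add: lp_symbol_def phi_lp_def admissible_chi_eq_0)
qed

lemma lp_symbol_eq_1:
  assumes "admissible_chi chi" "0 \<le> j"
    and "4/3 \<le> \<bar>2 powr (- real_of_int j) * of_int \<xi>\<bar>" "\<bar>2 powr (- real_of_int j) * of_int \<xi>\<bar> < 3/2"
  shows "lp_symbol chi j \<xi> = 1"
  using assms by (simp add: lp_symbol_def phi_lp_def admissible_chi_eq_0 admissible_chi_eq_1)

lemma lp_symbol_window:
  assumes "admissible_chi chi" "4 * 2 ^ j \<le> 3 * k" "2 * k < 3 * 2 ^ j"
  shows "lp_symbol chi (int j) (- k) = 1"
proof (rule lp_symbol_eq_1[OF assms(1)])
  have "0 < (2::int) ^ j" by simp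
  with assms(2) have "0 \<le> k" by linarith
  then have abs_eq: "\<bar>2 powr (- real_of_int (int j)) * of_int (- k)\<bar> = of_int k / 2 ^ j"
    by (simp add: powr_minus_divide powr_realpow abs_mult)
  have "real_of_int (4 * 2 ^ j) \<le> real_of_int (3 * k)" "real_of_int (2 * k) < real_of_int (3 * 2 ^ j)"
    using assms(2,3) by (simp_all only: of_int_le_iff of_int_less_iff)
  then have "4/3 \<le> of_int k / (2::real) ^ j" "of_int k / (2::real) ^ j < 3/2"
    by (simp_all add: field_simps)
  then show "4/3 \<le> \<bar>2 powr (- real_of_int (int j)) * of_int (- k)\<bar>"
    "\<bar>2 powr (- real_of_int (int j)) * of_int (- k)\<bar> < 3/2"
    unfolding abs_eq .
qed simp

lemma sum_lp_symbol: "(\<Sum>k\<in>{-1..int K - 1}. lp_symbol chi k \<xi>) = chi (2 powr (- real K) * of_int \<xi>)"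
proof (induction K)
  case (Suc K)
  have "2 powr (- real (Suc K)) = 2 powr (- real K - 1)"
    by (rule arg_cong[where f = "\<lambda>y. 2 powr y"]) simp
  then have "2 powr (- real (Suc K)) = 2 powr (- real K) / 2"
    by (simp add: powr_diff)
  then have half: "2 powr (- real K) * of_int \<xi> / 2 = 2 powr (- real (Suc K)) * of_int \<xi>"
    by (simp only: times_divide_eq_left)
  have "lp_symbol chi (int K) \<xi> = chi (2 powr (- real K) * of_int \<xi> / 2) - chi (2 powr (- real K) * of_int \<xi>)"
    by (simp add: lp_symbol_def phi_lp_def)
  then have step: "lp_symbol chi (int K) \<xi>
      = chi (2 powr (- real (Suc K)) * of_int \<xi>) - chi (2 powr (- real K) * of_int \<xi>)"
    unfolding half .
  have "{-1..int (Suc K) - 1} = insert (int K) {-1..int K - 1}" by auto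
  then show ?case using Suc.IH step by simp
qed (simp add: lp_symbol_def)

definition lp_band :: "nat \<Rightarrow> int set" where
  "lp_band K = {- (3 * 2 ^ K) .. 3 * 2 ^ K}"

lemma Delta_eq_trig_poly:
  assumes "admissible_chi chi" "-1 \<le> j" "j \<le> int K"
  shows "Delta chi j u = trig_poly (\<lambda>\<xi>. of_real (lp_symbol chi j \<xi> / (2 * pi)) * per_fourier u \<xi>) (lp_band K)"
proof
  fix x
  have vanish: "lp_symbol chi j \<xi> = 0" if "\<xi> \<notin> lp_band K" for \<xi>
  proof (rule lp_symbol_eq_0[OF assms(1,2)])
    have "2 powr real_of_int j \<le> 2 ^ K"
      using assms(3) powr_mono[of "real_of_int j" "real K" 2] by (simp add: powr_realpow)
    moreover have "3 * 2 ^ K < \<bar>\<xi>\<bar>" using that by (auto simp: lp_band_def)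
    then have "real_of_int (3 * 2 ^ K) < real_of_int \<bar>\<xi>\<bar>" by (simp only: of_int_less_iff)
    then have "3 * 2 ^ K < real_of_int \<bar>\<xi>\<bar>" by simp
    ultimately show "3 * 2 powr real_of_int j \<le> real_of_int \<bar>\<xi>\<bar>" by linarith
  qed
  have "Delta chi j u x = of_real (1 / (2 * pi)) *
      infsum (\<lambda>\<xi>. of_real (lp_symbol chi j \<xi>) * per_fourier u \<xi> * cis (x * of_int \<xi>)) UNIV"
    using assms(2) by (simp add: Delta_def lp_symbol_def)
  also have "infsum (\<lambda>\<xi>. of_real (lp_symbol chi j \<xi>) * per_fourier u \<xi> * cis (x * of_int \<xi>)) UNIV
      = (\<Sum>\<xi>\<in>lp_band K. of_real (lp_symbol chi j \<xi>) * per_fourier u \<xi> * cis (x * of_int \<xi>))"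
    by (subst infsum_cong_neutral[of "lp_band K"]) (auto simp: vanish lp_band_def)
  finally show "Delta chi j u x = trig_poly (\<lambda>\<xi>. of_real (lp_symbol chi j \<xi> / (2 * pi)) * per_fourier u \<xi>) (lp_band K) x"
    by (simp add: trig_poly_def sum_distrib_left algebra_simps)
qed

lemma S_lp_eq_trig_poly:
  assumes "admissible_chi chi"
  shows "S_lp chi (int K) u =
    trig_poly (\<lambda>\<xi>. of_real (chi (2 powr (- real K) * of_int \<xi>) / (2 * pi)) * per_fourier u \<xi>) (lp_band K)"
proof
  fix x
  have "S_lp chi (int K) u x =
      (\<Sum>k\<in>{-1..int K - 1}. trig_poly (\<lambda>\<xi>. of_real (lp_symbol chi k \<xi> / (2 * pi)) * per_fourier u \<xi>) (lp_band K) x)"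
    unfolding S_lp_def by (intro sum.cong refl) (simp add: Delta_eq_trig_poly[OF assms, where K = K])
  also have "\<dots> = trig_poly (\<lambda>\<xi>. of_real (chi (2 powr (- real K) * of_int \<xi>) / (2 * pi)) * per_fourier u \<xi>) (lp_band K) x"
    by (simp add: trig_poly_sum[symmetric] sum_lp_symbol[symmetric] sum_divide_distrib sum_distrib_right)
  finally show "S_lp chi (int K) u x = \<dots>" .
qed

section \<open>The squared derivative of a modulated polynomial\<close>

lemma has_vector_derivative_modulated:
  fixes A N :: real and \<epsilon> :: complex
  assumes "finite S"
  shows "((\<lambda>x. of_real (A * cos (N * x)) * (1 + \<epsilon> * trig_poly a S x)) has_vector_derivative
     of_real A * (of_real (- N * sin (N * x)) * (1 + \<epsilon> * trig_poly a S x)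
       + of_real (cos (N * x)) * (\<epsilon> * trig_poly (\<lambda>\<eta>. \<i> * of_int \<eta> * a \<eta>) S x))) (at x)"
proof -
  have "((\<lambda>x. of_real (A * cos (N * x))) has_vector_derivative of_real (A * (- sin (N * x) * N))) (at x)"
    by (rule has_vector_derivative_of_real) (auto intro!: derivative_eq_intros)
  moreover have "((\<lambda>x. 1 + \<epsilon> * trig_poly a S x) has_vector_derivative
      0 + \<epsilon> * trig_poly (\<lambda>\<eta>. \<i> * of_int \<eta> * a \<eta>) S x) (at x)"
    by (intro has_vector_derivative_add has_vector_derivative_const has_vector_derivative_mult_right
        has_vector_derivative_trig_poly assms)
  ultimately show ?thesis
    using has_vector_derivative_mult by (fastforce simp: algebra_simps)
qed

definition modulated_square_rest :: "real \<Rightarrow> real \<Rightarrow> complex \<Rightarrow> complex \<Rightarrow> complex \<Rightarrow> real \<Rightarrow> complex" where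
  "modulated_square_rest A N \<epsilon> f g t =
      of_real (A\<^sup>2 / 2) * (of_real (N\<^sup>2) + of_real (N\<^sup>2) * \<epsilon>\<^sup>2 * (f * f) + \<epsilon>\<^sup>2 * (g * g))
      + of_real (A\<^sup>2 / 2) * (of_real (cos (2 * t)) * (\<epsilon>\<^sup>2 * (g * g) - of_real (N\<^sup>2) * ((1 + \<epsilon> * f) * (1 + \<epsilon> * f)))
          - of_real (2 * N) * of_real (sin (2 * t)) * (\<epsilon> * g * (1 + \<epsilon> * f)))"

lemma modulated_derivative_square:
  fixes A N t :: real and \<epsilon> f g :: complex
  shows "(of_real A * (of_real (- N * sin t) * (1 + \<epsilon> * f) + of_real (cos t) * (\<epsilon> * g)))\<^sup>2
    = of_real (A\<^sup>2 * N\<^sup>2) * \<epsilon> * f + modulated_square_rest A N \<epsilon> f g t"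
proof -
  have pyth: "(of_real (sin t))\<^sup>2 + (of_real (cos t))\<^sup>2 = (1::complex)"
    by (metis of_real_add of_real_1 of_real_power sin_cos_squared_add)
  have "(of_real (cos (2 * t)) :: complex) = 1 - 2 * (of_real (sin t))\<^sup>2"
    by (simp add: cos_double_sin)
  moreover have "(of_real (sin (2 * t)) :: complex) = 2 * of_real (sin t) * of_real (cos t)"
    by (simp add: sin_double)
  ultimately show ?thesis using pyth
    unfolding modulated_square_rest_def of_real_mult of_real_power of_real_divide of_real_minus of_real_numeral
    by algebra
qed

text \<open>Products of two functions with odd spectrum have even spectrum, and the factors
  \<open>cos 2t\<close>, \<open>sin 2t\<close> shift the spectrum by \<open>\<plusminus>2N\<close>, beyond \<open>|\<xi>|\<close>.\<close>
lemma spectrum_in_modulated_square_rest: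
  fixes N B \<xi> :: int
  assumes f: "spectrum_in f {\<eta>. odd \<eta> \<and> \<bar>\<eta>\<bar> \<le> B}" and g: "spectrum_in g {\<eta>. odd \<eta> \<and> \<bar>\<eta>\<bar> \<le> B}"
    and "0 \<le> B" "\<bar>\<xi>\<bar> + 2 * B < 2 * N"
  shows "spectrum_in (\<lambda>x. modulated_square_rest A (of_int N) \<epsilon> (f x) (g x) (of_int N * x))
    {\<eta>. even \<eta> \<or> \<bar>\<xi>\<bar> < \<bar>\<eta>\<bar>}" (is "spectrum_in _ ?\<Omega>")
proof -
  define bnd where "bnd r = {\<eta>::int. \<bar>\<eta>\<bar> \<le> r}" for r
  have low: "spectrum_in (\<lambda>x. of_real (A\<^sup>2 / 2) *
      (of_real ((of_int N)\<^sup>2) + of_real ((of_int N)\<^sup>2) * \<epsilon>\<^sup>2 * (f x * f x) + \<epsilon>\<^sup>2 * (g x * g x))) ?\<Omega>"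
  proof -
    have "{\<eta> + \<zeta> |\<eta> \<zeta>. \<eta> \<in> {\<eta>. odd \<eta> \<and> \<bar>\<eta>\<bar> \<le> B} \<and> \<zeta> \<in> {\<eta>. odd \<eta> \<and> \<bar>\<eta>\<bar> \<le> B}} \<subseteq> ?\<Omega>"
      by auto
    then have "spectrum_in (\<lambda>x. f x * f x) ?\<Omega>" "spectrum_in (\<lambda>x. g x * g x) ?\<Omega>"
      using spectrum_in_mult[OF f f] spectrum_in_mult[OF g g] by (auto intro: spectrum_in_mono)
    then show ?thesis by (intro spectrum_in_cmult spectrum_in_add spectrum_in_const) auto
  qed
  have high: "spectrum_in (\<lambda>x. of_real (A\<^sup>2 / 2) * (of_real (cos (of_int (2 * N) * x)) *
          (\<epsilon>\<^sup>2 * (g x * g x) - of_real ((of_int N)\<^sup>2) * ((1 + \<epsilon> * f x) * (1 + \<epsilon> * f x)))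
        - of_real (2 * of_int N) * of_real (sin (of_int (2 * N) * x)) * (\<epsilon> * g x * (1 + \<epsilon> * f x)))) ?\<Omega>"
  proof -
    have fB: "spectrum_in f (bnd B)" and gB: "spectrum_in g (bnd B)"
      using f g by (auto simp: bnd_def intro: spectrum_in_mono)
    then have f1: "spectrum_in (\<lambda>x. 1 + \<epsilon> * f x) (bnd B)"
      using \<open>0 \<le> B\<close> by (intro spectrum_in_add spectrum_in_const spectrum_in_cmult) (auto simp: bnd_def)
    have prod: "{\<eta> + \<zeta> |\<eta> \<zeta>. \<eta> \<in> bnd B \<and> \<zeta> \<in> bnd B} \<subseteq> bnd (2 * B)"
      by (auto simp: bnd_def)
    have P: "spectrum_in (\<lambda>x. \<epsilon>\<^sup>2 * (g x * g x) - of_real ((of_int N)\<^sup>2) * ((1 + \<epsilon> * f x) * (1 + \<epsilon> * f x)))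
        (bnd (2 * B))"
      using spectrum_in_mult[OF gB gB] spectrum_in_mult[OF f1 f1]
      by (intro spectrum_in_diff spectrum_in_cmult spectrum_in_mono[OF _ prod])
    have Q: "spectrum_in (\<lambda>x. \<epsilon> * g x * (1 + \<epsilon> * f x)) (bnd (2 * B))"
      using spectrum_in_mult[OF spectrum_in_cmult[OF gB, of \<epsilon>] f1] by (intro spectrum_in_mono[OF _ prod])
    have carrier: "spectrum_in (\<lambda>x. of_real (cos (of_int (2 * N) * x))) {2 * N, - (2 * N)}"
      "spectrum_in (\<lambda>x. of_real (2 * of_int N) * of_real (sin (of_int (2 * N) * x))) {2 * N, - (2 * N)}"
      by (rule spectrum_in_cos; simp) (rule spectrum_in_cmult, rule spectrum_in_sin; simp)
    have "{\<eta> + \<zeta> |\<eta> \<zeta>. \<eta> \<in> {2 * N, - (2 * N)} \<and> \<zeta> \<in> bnd (2 * B)} \<subseteq> ?\<Omega>"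
      using assms(4) by (auto simp: bnd_def)
    then show ?thesis
      using spectrum_in_mult[OF carrier(1) P] spectrum_in_mult[OF carrier(2) Q]
      by (intro spectrum_in_cmult spectrum_in_diff) (auto intro: spectrum_in_mono simp: mult.assoc)
  qed
  have double: "2 * (of_int N * x) = of_int (2 * N) * x" for x :: real by simp
  show ?thesis unfolding modulated_square_rest_def double by (rule spectrum_in_add[OF low high])
qed

lemma per_fourier_modulated_derivative_square:
  fixes A :: real and N B :: int and \<epsilon> :: complex
  assumes S: "finite S" "\<And>\<eta>. \<eta> \<in> S \<Longrightarrow> a \<eta> \<noteq> 0 \<Longrightarrow> odd \<eta> \<and> \<bar>\<eta>\<bar> \<le> B"
    and \<xi>: "odd \<xi>" "\<bar>\<xi>\<bar> + 2 * B < 2 * N" and "0 \<le> B"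
  shows "per_fourier (\<lambda>x. (vector_derivative
      (\<lambda>x. of_real (A * cos (of_int N * x)) * (1 + \<epsilon> * trig_poly a S x)) (at x))\<^sup>2) \<xi>
    = of_real (2 * pi * A\<^sup>2 * of_int N ^ 2) * \<epsilon> * (if \<xi> \<in> S then a \<xi> else 0)"
proof -
  define f where "f = trig_poly a S"
  define g where "g = trig_poly (\<lambda>\<eta>. \<i> * of_int \<eta> * a \<eta>) S"
  define rest where "rest x = modulated_square_rest A (of_int N) \<epsilon> (f x) (g x) (of_int N * x)" for x
  have square: "(vector_derivative (\<lambda>x. of_real (A * cos (of_int N * x)) * (1 + \<epsilon> * f x)) (at x))\<^sup>2
      = of_real (A\<^sup>2 * (of_int N)\<^sup>2) * \<epsilon> * f x + rest x" for x
  proof -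
    have "vector_derivative (\<lambda>x. of_real (A * cos (of_int N * x)) * (1 + \<epsilon> * f x)) (at x)
        = of_real A * (of_real (- of_int N * sin (of_int N * x)) * (1 + \<epsilon> * f x)
          + of_real (cos (of_int N * x)) * (\<epsilon> * g x))"
      unfolding f_def g_def by (rule vector_derivative_at[OF has_vector_derivative_modulated[OF S(1)]])
    then show ?thesis by (simp only: modulated_derivative_square rest_def)
  qed
  have "spectrum_in f {\<eta>. odd \<eta> \<and> \<bar>\<eta>\<bar> \<le> B}" "spectrum_in g {\<eta>. odd \<eta> \<and> \<bar>\<eta>\<bar> \<le> B}"
    unfolding f_def g_def using S by (auto intro!: spectrum_in_trig_poly)
  from spectrum_in_modulated_square_rest[OF this \<open>0 \<le> B\<close> \<xi>(2)]
  have "((\<lambda>x. cis (- x * of_int \<xi>) * rest x) has_integral 0) {-pi..pi}"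
    unfolding rest_def[abs_def] by (rule spectrum_in_fourier_has_integral) (use \<xi>(1) in simp)
  moreover have "((\<lambda>x. of_real (A\<^sup>2 * (of_int N)\<^sup>2) * \<epsilon> * (cis (- x * of_int \<xi>) * f x)) has_integral
      of_real (A\<^sup>2 * (of_int N)\<^sup>2) * \<epsilon> * (of_real (2 * pi) * (if \<xi> \<in> S then a \<xi> else 0))) {-pi..pi}"
    unfolding f_def by (intro has_integral_mult_right trig_poly_fourier_has_integral S(1))
  ultimately have "((\<lambda>x. cis (- x * of_int \<xi>) * (of_real (A\<^sup>2 * (of_int N)\<^sup>2) * \<epsilon> * f x + rest x)) has_integral
      of_real (A\<^sup>2 * (of_int N)\<^sup>2) * \<epsilon> * (of_real (2 * pi) * (if \<xi> \<in> S then a \<xi> else 0)) + 0) {-pi..pi}"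
    by (subst distrib_left) (rule has_integral_add; simp add: mult_ac)
  then have "per_fourier (\<lambda>x. (vector_derivative
      (\<lambda>x. of_real (A * cos (of_int N * x)) * (1 + \<epsilon> * trig_poly a S x)) (at x))\<^sup>2) \<xi>
    = of_real (A\<^sup>2 * (of_int N)\<^sup>2) * \<epsilon> * (of_real (2 * pi) * (if \<xi> \<in> S then a \<xi> else 0)) + 0"
    unfolding per_fourier_def f_def[symmetric] square by (rule integral_unique)
  then show ?thesis by (simp add: mult_ac)
qed

lemma u0_amplitude_scale:
  assumes "0 < n"
  shows "(2 powr (- real n) * real n powr (-2/5) * ln (real n))\<^sup>2 * (2 ^ n)\<^sup>2 * real n powr (-1/5)
    = (ln (real n))\<^sup>2 / real n"
proof -
  have "(2 powr (- real n))\<^sup>2 * (2 ^ n)\<^sup>2 = (1::real)"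
    by (simp add: powr_minus powr_realpow power_mult_distrib[symmetric])
  moreover have "(real n powr (-2/5))\<^sup>2 * real n powr (-1/5) = 1 / real n"
  proof -
    have "(real n powr (-2/5))\<^sup>2 * real n powr (-1/5) = real n powr (-2/5 + -2/5 + -1/5)"
      using assms by (simp only: power2_eq_square powr_add)
    also have "\<dots> = real n powr (-1)" by simp
    also have "\<dots> = 1 / real n" using assms by (simp add: powr_minus divide_inverse)
    finally show ?thesis .
  qed
  moreover have "(2 powr (- real n) * real n powr (-2/5) * ln (real n))\<^sup>2 * (2 ^ n)\<^sup>2 * real n powr (-1/5)
      = ((2 powr (- real n))\<^sup>2 * (2 ^ n)\<^sup>2) * ((real n powr (-2/5))\<^sup>2 * real n powr (-1/5)) * (ln (real n))\<^sup>2"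
    by (simp add: power_mult_distrib)
  ultimately show ?thesis by simp
qed

lemma per_fourier_u0_derivative_square:
  assumes chi: "admissible_chi chi" and n: "4 \<le> n" and \<xi>: "odd \<xi>" "4 * \<bar>\<xi>\<bar> < 3 * 2 ^ (n div 2)"
  shows "per_fourier (\<lambda>x. (vector_derivative (u0 chi n) (at x))\<^sup>2) \<xi>
    = of_real ((ln (real n))\<^sup>2 / real n) * (- 2 * \<i> / of_int \<xi>)"
proof -
  define K where "K = n div 2"
  define A where "A = 2 powr (- real n) * real n powr (-2/5) * ln (real n)"
  define \<epsilon> where "\<epsilon> = real n powr (-1/5)"
  define c where "c = (\<lambda>\<eta>. of_real (chi (2 powr (- real K) * of_int \<eta>) / (2 * pi)) * per_fourier (\<lambda>x. of_real (hsq x)) \<eta>)"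
  have u0: "u0 chi n = (\<lambda>x. of_real (A * cos (of_int (2 ^ n) * x)) * (1 + of_real \<epsilon> * trig_poly c (lp_band K) x))"
    by (simp add: fun_eq_iff u0_def f_n_def S_lp_eq_trig_poly[OF chi] A_def \<epsilon>_def c_def K_def)
  have support: "odd \<eta> \<and> \<bar>\<eta>\<bar> \<le> 3 * 2 ^ K" if "\<eta> \<in> lp_band K" "c \<eta> \<noteq> 0" for \<eta>
    using that by (auto simp: c_def per_fourier_hsq lp_band_def split: if_splits)
  have "(2::int) ^ 2 \<le> 2 ^ K" using n by (intro power_increasing) (auto simp: K_def)
  then have "(2::int) ^ K * 4 \<le> 2 ^ K * 2 ^ K" by (intro mult_left_mono) simp_all
  also have "\<dots> = 2 ^ (K + K)" by (simp add: power_add)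
  also have "\<dots> \<le> 2 ^ n" by (intro power_increasing) (auto simp: K_def)
  finally have high: "\<bar>\<xi>\<bar> + 2 * (3 * 2 ^ K) < 2 * 2 ^ n"
    using \<xi>(2) by (simp add: K_def)
  have in_band: "\<xi> \<in> lp_band K" using \<xi>(2) by (auto simp: lp_band_def K_def)
  have "real_of_int (4 * \<bar>\<xi>\<bar>) < real_of_int (3 * 2 ^ K)" using \<xi>(2) unfolding K_def of_int_less_iff .
  then have "real_of_int \<bar>\<xi>\<bar> / 2 ^ K < 3/4" by (simp add: field_simps)
  moreover have "2 powr (- real K) = 1 / 2 ^ K" by (simp add: powr_minus_divide powr_realpow)
  ultimately have "\<bar>2 powr (- real K) * of_int \<xi>\<bar> < 3/4" by (simp add: abs_mult)
  then have c: "c \<xi> = of_real (1 / (2 * pi)) * (- 2 * \<i> / of_int \<xi>)"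
    using \<xi>(1) by (simp add: c_def per_fourier_hsq admissible_chi_eq_1[OF chi])
  have scale: "A\<^sup>2 * (2 ^ n)\<^sup>2 * \<epsilon> = (ln (real n))\<^sup>2 / real n"
    using u0_amplitude_scale n unfolding A_def \<epsilon>_def by simp
  have "per_fourier (\<lambda>x. (vector_derivative (u0 chi n) (at x))\<^sup>2) \<xi>
      = of_real (2 * pi * A\<^sup>2 * of_int (2 ^ n) ^ 2) * of_real \<epsilon> * c \<xi>"
    unfolding u0 using in_band
    by (subst per_fourier_modulated_derivative_square[where B = "3 * 2 ^ K"])
       (use support high \<xi>(1) in \<open>auto simp: lp_band_def\<close>)
  also have "\<dots> = of_real (A\<^sup>2 * (2 ^ n)\<^sup>2 * \<epsilon>) * (- 2 * \<i> / of_int \<xi>)"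
    by (simp add: c field_simps)
  finally show ?thesis by (simp only: scale)
qed

section \<open>Lower bounds for the dyadic blocks\<close>

text \<open>Pairing \<open>\<Delta>\<^sub>j F\<close> with the modulated Fejer kernel with \<open>L = 2^(j-5)\<close> and \<open>M = 46 L - 1\<close>,
  whose frequencies all lie in the window where the symbol of \<open>\<Delta>\<^sub>j\<close> is \<open>1\<close>, averages \<open>L\<^sup>2\<close>
  coefficients \<open>c \<cdot> 2i/k\<close> with \<open>k \<approx> 46 L\<close> over \<open>L\<close>; they all have the same phase, so nothing cancels.\<close>
lemma Linf_Delta_lower_bound:
  assumes chi: "admissible_chi chi" and j: "5 \<le> j" and "0 \<le> c"
    and F: "\<And>k. odd k \<Longrightarrow> 4 * 2 ^ j \<le> 3 * k \<Longrightarrow> 2 * k < 3 * 2 ^ j \<Longrightarrow>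
              per_fourier F (- k) = of_real c * (2 * \<i> / of_int k)"
  shows "c / (48 * pi) \<le> Linf (Delta chi (int j) F)"
proof -
  define L :: nat where "L = 2 ^ (j - 5)"
  have "(2::nat) ^ j = 2 ^ (5 + (j - 5))" using j by simp
  then have "(2::nat) ^ j = 32 * L" by (simp add: power_add L_def)
  then have L: "0 < L" "(2::int) ^ j = 32 * int L"
    by (simp_all add: L_def) (metis of_nat_mult of_nat_numeral of_nat_power)
  define M :: int where "M = 46 * int L - 1"
  define k where "k t t' = M + 2 * int t - 2 * int t'" for t t' :: nat
  have k_range: "44 * int L < k t t' \<and> k t t' < 48 * int L" if "t < L" "t' < L" for t t'
    using that by (auto simp: k_def M_def)
  define b where "b \<eta> = of_real (lp_symbol chi (int j) \<eta> / (2 * pi)) * per_fourier F \<eta>" for \<eta>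
  have Delta: "Delta chi (int j) F = trig_poly b (lp_band j)"
    unfolding b_def by (rule Delta_eq_trig_poly[OF chi]) auto
  have coeff: "(if - (M + 2 * int t - 2 * int t') \<in> lp_band j then b (- (M + 2 * int t - 2 * int t')) else 0)
      = of_real (c / pi) * \<i> * of_real (1 / of_int (k t t'))"
    if "t < L" "t' < L" for t t'
  proof -
    have window: "4 * 2 ^ j \<le> 3 * k t t'" "2 * k t t' < 3 * 2 ^ j" "odd (k t t')"
      using k_range[OF that] L by (auto simp: k_def M_def)
    have "M + 2 * int t - 2 * int t' = k t t'" by (simp add: k_def)
    moreover have "- k t t' \<in> lp_band j" using k_range[OF that] L by (auto simp: lp_band_def)
    ultimately show ?thesis
      using lp_symbol_window[OF chi window(1,2)] F[OF window(3,1,2)] by (simp add: b_def field_simps)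
  qed
  define R where "R = (\<Sum>t<L. \<Sum>t'<L. 1 / real_of_int (k t t'))"
  have R: "real L / 48 \<le> R"
  proof -
    have "(\<Sum>t<L. \<Sum>t'<L. 1 / (48 * real L)) \<le> R"
      unfolding R_def
    proof (intro sum_mono)
      fix t t' assume "t \<in> {..<L}" "t' \<in> {..<L}"
      then have "real_of_int (44 * int L) < of_int (k t t')" "of_int (k t t') < real_of_int (48 * int L)"
        using k_range by (simp_all only: of_int_less_iff lessThan_iff)
      then show "1 / (48 * real L) \<le> 1 / real_of_int (k t t')"
        using L by (intro divide_left_mono) auto
    qed
    then show ?thesis using L by (simp add: field_simps)
  qed
  have sum_eq: "(\<Sum>t<L. \<Sum>t'<L.
        if - (M + 2 * int t - 2 * int t') \<in> lp_band j then b (- (M + 2 * int t - 2 * int t')) else 0)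
      = of_real (c / pi) * \<i> * of_real R"
    unfolding R_def by (subst sum.cong[OF refl sum.cong[OF refl coeff]]) (simp_all add: sum_distrib_left)
  have "cmod (of_real (c / pi) * \<i> * of_real R) / real L \<le> Linf (Delta chi (int j) F)"
    using Linf_trig_poly_ge_fejer_average[of "lp_band j" L M b] L unfolding Delta sum_eq
    by (simp add: lp_band_def)
  moreover have "0 \<le> R" using R of_nat_0_le_iff[of L] by linarith
  then have "cmod (of_real (c / pi) * \<i> * of_real R) = c / pi * R"
    using \<open>0 \<le> c\<close> by (simp only: norm_mult norm_ii norm_of_real) simp
  ultimately have "c / pi * R / real L \<le> Linf (Delta chi (int j) F)" by simp
  moreover have "c / (48 * pi) \<le> c / pi * R / real L"
    using mult_left_mono[OF R, of "c / pi"] \<open>0 \<le> c\<close> L by (simp add: field_simps)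
  ultimately show ?thesis by linarith
qed

lemma Linf_Delta_u0_derivative_square_lower_bound:
  assumes chi: "admissible_chi chi" and j: "5 \<le> j" "j + 2 \<le> n div 2"
  shows "(ln (real n))\<^sup>2 / (48 * pi * real n)
    \<le> Linf (Delta chi (int j) (\<lambda>x. (vector_derivative (u0 chi n) (at x))\<^sup>2))"
proof -
  have "(ln (real n))\<^sup>2 / real n / (48 * pi)
      \<le> Linf (Delta chi (int j) (\<lambda>x. (vector_derivative (u0 chi n) (at x))\<^sup>2))"
  proof (rule Linf_Delta_lower_bound[OF chi j(1)])
    fix k :: int assume k: "odd k" "4 * 2 ^ j \<le> 3 * k" "2 * k < 3 * 2 ^ j"
    have "(2::int) ^ (j + 2) \<le> 2 ^ (n div 2)" using j by (intro power_increasing) auto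
    then have small: "4 * \<bar>- k\<bar> < 3 * 2 ^ (n div 2)" using k by (simp add: power_add)
    show "per_fourier (\<lambda>x. (vector_derivative (u0 chi n) (at x))\<^sup>2) (- k)
        = of_real ((ln (real n))\<^sup>2 / real n) * (2 * \<i> / of_int k)"
      using per_fourier_u0_derivative_square[OF chi _ _ small] j k(1) by simp
  qed simp
  then show ?thesis by (simp add: field_simps)
qed

lemma card_Nset_ge:
  assumes "8 dvd n"
  shows "real n / 8 \<le> real (card (Nset n))"
proof -
  obtain p where n: "n = 8 * p" using assms by blast
  have "finite (Nset n)" by (rule finite_subset[of _ "{..n}"]) (auto simp: Nset_def)
  moreover have "{p..2 * p} \<subseteq> Nset n" by (auto simp: Nset_def n)
  ultimately have "card {p..2 * p} \<le> card (Nset n)" by (intro card_mono)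
  then show ?thesis by (simp add: n)
qed

theorem lemma3p3:
  fixes chi :: "real \<Rightarrow> real"
  assumes "admissible_chi chi"
  shows "\<exists>c>0. \<exists>N. \<forall>n\<ge>N. 16 dvd n \<longrightarrow>
           besov_trunc chi 0 (Nset n) (\<lambda>x. (vector_derivative (u0 chi n) (at x))\<^sup>2)
             \<ge> c * (ln (real n))\<^sup>2"
proof (intro exI[of _ "1 / (384 * pi)"] conjI exI[of _ "48::nat"] allI impI)
  fix n :: nat assume n: "48 \<le> n" "16 dvd n"
  define F where "F = (\<lambda>x. (vector_derivative (u0 chi n) (at x))\<^sup>2)"
  define B where "B = (ln (real n))\<^sup>2 / (48 * pi * real n)"
  have block: "B \<le> 2 ^ (0 * j) * Linf (Delta chi (int j) F)" if "j \<in> Nset n" for j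
  proof -
    have "real n \<le> 8 * real j" "4 * real j \<le> real n" using that by (auto simp: Nset_def)
    then have "5 \<le> j" "j + 2 \<le> n div 2" using n(1) by linarith+
    then show ?thesis using Linf_Delta_u0_derivative_square_lower_bound[OF assms] by (simp add: B_def F_def)
  qed
  have "1 / (384 * pi) * (ln (real n))\<^sup>2 = real n / 8 * B" using n(1) by (simp add: B_def field_simps)
  also have "\<dots> \<le> real (card (Nset n)) * B"
    using card_Nset_ge[of n] n(2) by (intro mult_right_mono) (auto simp: B_def dvd_trans[of 8 16])
  also have "\<dots> \<le> besov_trunc chi 0 (Nset n) F"
    unfolding besov_trunc_def using sum_mono[of "Nset n" "\<lambda>_. B", OF block] by simp
  finally show "1 / (384 * pi) * (ln (real n))\<^sup>2 \<le> besov_trunc chi 0 (Nset n) F" .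
qed simp

end
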